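(* Let $a_1>a_2>\cdots>a_n$ be real numbers in $[a,b]$ and $w_1,\dots,w_n$ real weights with \[ \sum_{i=1}^n w_i=\sum_{i=1}^n w_ia_i=\sum_{i=1}^n w_ia_i^2=0. \] For $1\le j\le n$ write $W_j=\sum_{i=1}^j w_i$, $M_j=\sum_{i=1}^j w_ia_i$, $Q_j=\sum_{i=1}^j w_ia_i^2$. Then $\sum_{i=1}^n w_if(a_i)\ge 0$ holds for every three times differentiable $f:[a,b]\to\mathbb{R}$ with $f'''\ge 0$ if and only if \[ W_jQ_j\ge M_j^2 \] for every $j\in\{1,\dots,n-1\}$ satisfying $W_j a_j\ge M_j\ge W_j a_{j+1}$. *)

theory Defs
  imports "HOL-Analysis.Analysis"
begin

definition thrice_diff_nonneg3 :: "real \<Rightarrow> real \<Rightarrow> (real \<Rightarrow> real) \<Rightarrow> bool" where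
  "thrice_diff_nonneg3 a b f \<longleftrightarrow>
     (\<exists>f1 f2 f3.
        (\<forall>x\<in>{a..b}. (f has_real_derivative f1 x) (at x within {a..b})) \<and>
        (\<forall>x\<in>{a..b}. (f1 has_real_derivative f2 x) (at x within {a..b})) \<and>
        (\<forall>x\<in>{a..b}. (f2 has_real_derivative f3 x) (at x within {a..b})) \<and>
        (\<forall>x\<in>{a..b}. f3 x \<ge> 0))"

end

theory Submission
  imports Defs
begin

(* Let w 1, ..., w n be weights at nodes x 1 > ... > x n that annihilate 1, x and x^2.
   The functional  L f = (\<Sum>i=1..n. w i * f (x i))  has the Peano kernel
     G t = (\<Sum>i=1..n. w i * (max (x i - t) 0)^2),
   i.e. L applied to the truncated square y \<mapsto> (y - t)\<^sub>+\<^sup>2, and the theorem splits into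
     (1) L f \<ge> 0 for all f with f''' \<ge> 0   \<longleftrightarrow>   G \<ge> 0,
     (2) G \<ge> 0   \<longleftrightarrow>   the stated conditions on the partial moments W j, M j, Q j.
   On a gap [x (j+1), x j] between consecutive nodes G is the quadratic W j t^2 - 2 M j t + Q j,
   and G vanishes outside [x n, x 1].
   For (1), sufficiency compares L f with Taylor remainders expanded at a moving point, whose
   slope is -f'''/2 times G; necessity tests L on a narrow second difference of (y - s)\<^sub>+\<^sup>4,
   whose third derivative is a hat function, centred where G < 0.
   For (2), a violated condition makes the quadratic negative at its vertex M j / W j; conversely
   at the leftmost minimum point of a kernel with a negative value the conditions yield a
   contradiction. *)

lemma truncated_power_deriv:
  fixes c y :: real and k :: nat
  assumes "2 \<le> k"
  shows "((\<lambda>y. (max (y - c) 0) ^ k) has_real_derivative real k * (max (y - c) 0) ^ (k - 1)) (at y)"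
proof -
  have power_deriv: "((\<lambda>y. (y - c) ^ k) has_real_derivative real k * (y - c) ^ (k - 1)) (at y within S)"
    for S y by (auto intro!: derivative_eq_intros)
  have const_deriv: "((\<lambda>y. 0::real) has_real_derivative 0) (at y within S)" for S y
    by simp
  consider "y < c" | "c < y" | "y = c" by linarith
  then show ?thesis
  proof cases
    case 1
    have "((\<lambda>y. (max (y - c) 0) ^ k) has_real_derivative 0) (at y)"
      by (rule has_field_derivative_transform_within_open[OF const_deriv[of y UNIV], of "{..<c}"])
         (use 1 assms in auto)
    then show ?thesis using 1 assms by (simp add: power_0_left)
  next
    case 2
    have "((\<lambda>y. (max (y - c) 0) ^ k) has_real_derivative real k * (y - c) ^ (k - 1)) (at y)"
      by (rule has_field_derivative_transform_within_open[OF power_deriv[of y UNIV], of "{c<..}"])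
         (use 2 in auto)
    then show ?thesis using 2 by simp
  next
    case 3
    \<comment> \<open>At the kink both one-sided derivatives vanish because \<open>k \<ge> 2\<close>.\<close>
    have left: "((\<lambda>y. (max (y - c) 0) ^ k) has_real_derivative 0) (at c within {..c})"
      by (rule has_field_derivative_transform_within[OF const_deriv zero_less_one]) (use assms in auto)
    have "((\<lambda>y. (y - c) ^ k) has_real_derivative 0) (at c within {c..})"
      using power_deriv[of c "{c..}"] assms by (simp add: power_0_left)
    then have right: "((\<lambda>y. (max (y - c) 0) ^ k) has_real_derivative 0) (at c within {c..})"
      by (rule has_field_derivative_transform_within[OF _ zero_less_one]) auto
    have "((\<lambda>y. (max (y - c) 0) ^ k) has_real_derivative 0) (at c within ({..c} \<union> {c..}))"
      using left right unfolding has_field_derivative_iff by (rule Lim_Un)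
    moreover have "{..c} \<union> {c..} = (UNIV :: real set)" by auto
    ultimately show ?thesis using 3 assms by (simp add: power_0_left)
  qed
qed

text \<open>The Peano kernel of \<open>f \<mapsto> \<Sum>i=1..n. w i * f (x i)\<close> on functions with \<open>f''' \<ge> 0\<close>
  (up to a factor \<open>1/2\<close>): the functional applied to the truncated square \<open>y \<mapsto> (y - t)\<^sub>+\<^sup>2\<close>.\<close>
definition peano_kernel :: "nat \<Rightarrow> (nat \<Rightarrow> real) \<Rightarrow> (nat \<Rightarrow> real) \<Rightarrow> real \<Rightarrow> real" where
  "peano_kernel n w x t = (\<Sum>i=1..n. w i * (max (x i - t) 0) ^ 2)"

lemma peano_kernel_deriv:
  "(peano_kernel n w x has_real_derivative -2 * (\<Sum>i=1..n. w i * max (x i - t) 0)) (at t)"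
proof -
  have "((\<lambda>t. (max (x i - t) 0) ^ 2) has_real_derivative -2 * max (x i - t) 0) (at t)" for i
  proof -
    have "((\<lambda>t. (max ((2 * x i - t) - x i) 0) ^ 2) has_real_derivative
            (real 2 * (max ((2 * x i - t) - x i) 0) ^ (2 - 1)) * (-1)) (at t)"
      by (rule DERIV_chain2[OF truncated_power_deriv]) (auto intro!: derivative_eq_intros)
    then show ?thesis by simp
  qed
  then have "(peano_kernel n w x has_real_derivative (\<Sum>i=1..n. w i * (-2 * max (x i - t) 0))) (at t)"
    unfolding peano_kernel_def[abs_def] by (intro DERIV_sum DERIV_cmult)
  then show ?thesis by (simp add: sum_distrib_left mult.left_commute)
qed

lemma peano_kernel_continuous: "continuous_on S (peano_kernel n w x)"
  by (rule DERIV_continuous_on, rule has_field_derivative_at_within, rule peano_kernel_deriv)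

definition decreasing_nodes :: "nat \<Rightarrow> (nat \<Rightarrow> real) \<Rightarrow> bool" where
  "decreasing_nodes n x \<longleftrightarrow> (\<forall>i j. 1 \<le> i \<longrightarrow> i < j \<longrightarrow> j \<le> n \<longrightarrow> x j < x i)"

definition vanishing_moments :: "nat \<Rightarrow> (nat \<Rightarrow> real) \<Rightarrow> (nat \<Rightarrow> real) \<Rightarrow> bool" where
  "vanishing_moments n w x \<longleftrightarrow>
     (\<Sum>i=1..n. w i) = 0 \<and> (\<Sum>i=1..n. w i * x i) = 0 \<and> (\<Sum>i=1..n. w i * (x i) ^ 2) = 0"

lemma decreasing_nodes_less:
  "decreasing_nodes n x \<Longrightarrow> 1 \<le> i \<Longrightarrow> i < j \<Longrightarrow> j \<le> n \<Longrightarrow> x j < x i"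
  unfolding decreasing_nodes_def by blast

lemma decreasing_nodes_le:
  assumes "decreasing_nodes n x" and "1 \<le> i" "i \<le> j" "j \<le> n"
  shows "x j \<le> x i"
  using decreasing_nodes_less[OF assms(1), of i j] assms(2-4) by (cases "i = j") auto

lemma sum_upto_split:
  fixes F A :: "nat \<Rightarrow> 'a::comm_monoid_add"
  assumes "j \<le> n"
    and "\<And>i. 1 \<le> i \<Longrightarrow> i \<le> j \<Longrightarrow> F i = A i"
    and "\<And>i. j < i \<Longrightarrow> i \<le> n \<Longrightarrow> F i = 0"
  shows "(\<Sum>i=1..n. F i) = (\<Sum>i=1..j. A i)"
proof -
  have "{1..n} = {1..j} \<union> {j+1..n}" using assms(1) by auto
  then have "(\<Sum>i=1..n. F i) = (\<Sum>i=1..j. F i) + (\<Sum>i=j+1..n. F i)"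
    by (simp add: sum.union_disjoint)
  also have "(\<Sum>i=j+1..n. F i) = 0" using assms(3) by (intro sum.neutral) auto
  also have "(\<Sum>i=1..j. F i) = (\<Sum>i=1..j. A i)" using assms(2) by (intro sum.cong) auto
  finally show ?thesis by simp
qed

lemma sum_quadratic_moments:
  fixes w x :: "nat \<Rightarrow> real"
  shows "(\<Sum>i=1..j. w i * (\<alpha> + \<beta> * x i + \<gamma> * (x i) ^ 2)) =
           \<alpha> * (\<Sum>i=1..j. w i) + \<beta> * (\<Sum>i=1..j. w i * x i) + \<gamma> * (\<Sum>i=1..j. w i * (x i) ^ 2)"
  by (simp add: algebra_simps sum.distrib sum_distrib_left)

lemma weighted_square_expand:
  fixes w x :: "nat \<Rightarrow> real"
  shows "(\<Sum>i=1..j. w i * (x i - u) ^ 2) =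
           (\<Sum>i=1..j. w i) * u ^ 2 - 2 * u * (\<Sum>i=1..j. w i * x i) + (\<Sum>i=1..j. w i * (x i) ^ 2)"
proof -
  have "(x i - u) ^ 2 = u ^ 2 + (- 2 * u) * x i + 1 * (x i) ^ 2" for i
    by (simp add: power2_eq_square algebra_simps)
  then show ?thesis by (simp only: sum_quadratic_moments) (simp add: algebra_simps)
qed

lemma vanishing_moments_quadratic:
  assumes "vanishing_moments n w x"
  shows "(\<Sum>i=1..n. w i * (\<alpha> + \<beta> * x i + \<gamma> * (x i) ^ 2)) = 0"
  using assms unfolding vanishing_moments_def sum_quadratic_moments by simp

text \<open>The cases \<open>j = 0\<close> and \<open>j = n\<close> cover \<open>t \<ge> x 1\<close> and
  \<open>t \<le> x n\<close>.\<close>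
lemma truncated_sum_between:
  fixes x w :: "nat \<Rightarrow> real" and \<phi> :: "real \<Rightarrow> real"
  assumes decr: "decreasing_nodes n x"
    and "j \<le> n" and "1 \<le> j \<Longrightarrow> t \<le> x j" and "j < n \<Longrightarrow> x (j+1) \<le> t" and "\<phi> 0 = 0"
  shows "(\<Sum>i=1..n. w i * \<phi> (max (x i - t) 0)) = (\<Sum>i=1..j. w i * \<phi> (x i - t))"
proof (rule sum_upto_split[OF \<open>j \<le> n\<close>])
  fix i assume "1 \<le> i" "i \<le> j"
  then have "t \<le> x i" using decreasing_nodes_le[OF decr, of i j] assms(2,3) by fastforce
  then show "w i * \<phi> (max (x i - t) 0) = w i * \<phi> (x i - t)" by simp
next
  fix i assume "j < i" "i \<le> n"
  then have "x i \<le> t" using decreasing_nodes_le[OF decr, of "j+1" i] assms(4) by fastforce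
  then show "w i * \<phi> (max (x i - t) 0) = 0" using \<open>\<phi> 0 = 0\<close> by simp
qed

lemma peano_kernel_between:
  fixes x w :: "nat \<Rightarrow> real"
  assumes "decreasing_nodes n x"
    and "j \<le> n" and "1 \<le> j \<Longrightarrow> t \<le> x j" and "j < n \<Longrightarrow> x (j+1) \<le> t"
  shows "peano_kernel n w x t = (\<Sum>i=1..j. w i * (x i - t) ^ 2)"
  unfolding peano_kernel_def
  using truncated_sum_between[where \<phi>="\<lambda>u. u ^ 2", OF assms] by simp

lemma peano_kernel_quadratic:
  fixes x w :: "nat \<Rightarrow> real"
  assumes decr: "decreasing_nodes n x" and "1 \<le> j" "j < n" "x (j+1) \<le> t" "t \<le> x j"
  shows "peano_kernel n w x t =
           (\<Sum>i=1..j. w i) * t ^ 2 - 2 * t * (\<Sum>i=1..j. w i * x i) + (\<Sum>i=1..j. w i * (x i) ^ 2)"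
proof -
  have "peano_kernel n w x t = (\<Sum>i=1..j. w i * (x i - t) ^ 2)"
    using assms(2-5) by (intro peano_kernel_between[OF decr]) auto
  also have "\<dots> = (\<Sum>i=1..j. w i) * t ^ 2 - 2 * t * (\<Sum>i=1..j. w i * x i) + (\<Sum>i=1..j. w i * (x i) ^ 2)"
    by (rule weighted_square_expand)
  finally show ?thesis .
qed

lemma peano_kernel_slope:
  fixes x w :: "nat \<Rightarrow> real"
  assumes decr: "decreasing_nodes n x" and "1 \<le> j" "j < n" "x (j+1) \<le> t" "t \<le> x j"
  shows "(peano_kernel n w x has_real_derivative
            -2 * ((\<Sum>i=1..j. w i * x i) - t * (\<Sum>i=1..j. w i))) (at t)"
proof -
  have "(\<Sum>i=1..n. w i * max (x i - t) 0) = (\<Sum>i=1..j. w i * (x i - t))"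
    using assms(2-5) by (intro truncated_sum_between[where \<phi>="\<lambda>u. u", OF decr]) auto
  also have "\<dots> = (\<Sum>i=1..j. w i * x i) - t * (\<Sum>i=1..j. w i)"
    by (simp add: right_diff_distrib sum_subtractf sum_distrib_left mult.commute)
  finally show ?thesis using peano_kernel_deriv[of n w x t] by simp
qed

lemma peano_kernel_vanishes_outside:
  fixes x w :: "nat \<Rightarrow> real"
  assumes decr: "decreasing_nodes n x"
    and moments: "vanishing_moments n w x"
    and outside: "t \<notin> {x n<..<x 1}"
  shows "peano_kernel n w x t = 0"
proof (cases "x 1 \<le> t")
  case True
  then show ?thesis using peano_kernel_between[OF decr, of 0 t w] by simp
next
  case False
  then have "t \<le> x n" using outside by auto
  then have "peano_kernel n w x t = (\<Sum>i=1..n. w i * (x i - t) ^ 2)"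
    using peano_kernel_between[OF decr, of n t w] by simp
  also have "\<dots> = (\<Sum>i=1..n. w i * (t ^ 2 + (- 2 * t) * x i + 1 * (x i) ^ 2))"
    by (intro sum.cong) (simp_all add: power2_eq_square algebra_simps)
  also have "\<dots> = 0" by (rule vanishing_moments_quadratic[OF moments])
  finally show ?thesis .
qed

lemma node_gap:
  fixes x :: "nat \<Rightarrow> real"
  assumes "1 \<le> n" "x n < t" "t \<le> x 1"
  obtains j where "1 \<le> j" "j < n" "x (j+1) < t" "t \<le> x j"
proof -
  define J where "J = {i\<in>{1..n}. t \<le> x i}"
  define j where "j = Max J"
  have "finite J" "1 \<in> J" using assms by (auto simp: J_def)
  then have "j \<in> J" and j_max: "\<And>i. i \<in> J \<Longrightarrow> i \<le> j"
    unfolding j_def by (auto intro: Max_in)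
  then have j: "1 \<le> j" "j \<le> n" "t \<le> x j" by (auto simp: J_def)
  then have "j \<noteq> n" using \<open>x n < t\<close> by auto
  moreover have "x (j+1) < t"
  proof (rule ccontr)
    assume "\<not> x (j+1) < t"
    then have "j + 1 \<in> J" using j \<open>j \<noteq> n\<close> by (simp add: J_def)
    then show False using j_max by fastforce
  qed
  ultimately show ?thesis using that j by simp
qed

lemma negative_kernel_in_gap:
  fixes x w :: "nat \<Rightarrow> real"
  assumes decr: "decreasing_nodes n x"
    and moments: "vanishing_moments n w x"
    and negative: "peano_kernel n w x t < 0"
  obtains j where "1 \<le> j" "j < n" "x (j+1) < t" "t \<le> x j"
proof -
  have "n \<noteq> 0" using negative by (intro notI) (simp add: peano_kernel_def)
  moreover have "x n < t" "t < x 1"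
    using negative peano_kernel_vanishes_outside[OF decr moments, of t] by force+
  ultimately have "1 \<le> n" "x n < t" "t \<le> x 1" by auto
  then show ?thesis using that by (rule node_gap)
qed

lemma taylor_remainder_deriv:
  fixes f f1 f2 f3 :: "real \<Rightarrow> real"
  assumes "(f has_real_derivative f1 t) (at t within S)"
    and "(f1 has_real_derivative f2 t) (at t within S)"
    and "(f2 has_real_derivative f3 t) (at t within S)"
  shows "((\<lambda>t. f y - f t - f1 t * (y - t) - f2 t * (y - t) ^ 2 / 2)
           has_real_derivative -(f3 t * (y - t) ^ 2 / 2)) (at t within S)"
  by (rule derivative_eq_intros assms refl | simp)+
     (simp add: divide_simps; simp add: algebra_simps power2_eq_square)

definition taylor_remainder_sum ::
    "(real \<Rightarrow> real) \<Rightarrow> (real \<Rightarrow> real) \<Rightarrow> (real \<Rightarrow> real) \<Rightarrow> (nat \<Rightarrow> real) \<Rightarrow> (nat \<Rightarrow> real) \<Rightarrow>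
       nat \<Rightarrow> real \<Rightarrow> real" where
  "taylor_remainder_sum f f1 f2 w x j t =
     (\<Sum>i=1..j. w i * (f (x i) - f t - f1 t * (x i - t) - f2 t * (x i - t) ^ 2 / 2))"

lemma taylor_remainder_sum_deriv:
  fixes f f1 f2 f3 :: "real \<Rightarrow> real"
  assumes "(f has_real_derivative f1 t) (at t within S)"
    and "(f1 has_real_derivative f2 t) (at t within S)"
    and "(f2 has_real_derivative f3 t) (at t within S)"
  shows "(taylor_remainder_sum f f1 f2 w x j has_real_derivative
            -(f3 t / 2) * (\<Sum>i=1..j. w i * (x i - t) ^ 2)) (at t within S)"
proof -
  have "(taylor_remainder_sum f f1 f2 w x j has_real_derivative
          (\<Sum>i=1..j. w i * -(f3 t * (x i - t) ^ 2 / 2))) (at t within S)"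
    unfolding taylor_remainder_sum_def[abs_def]
    by (intro DERIV_sum DERIV_cmult taylor_remainder_deriv assms)
  then show ?thesis by (simp add: sum_distrib_left mult.left_commute)
qed

text \<open>Over all nodes the Taylor polynomials are annihilated, leaving the functional itself.\<close>
lemma taylor_remainder_sum_all:
  assumes "vanishing_moments n w x"
  shows "taylor_remainder_sum f f1 f2 w x n t = (\<Sum>i=1..n. w i * f (x i))"
proof -
  define p where "p y = (f t - f1 t * t + f2 t * t ^ 2 / 2) + (f1 t - f2 t * t) * y + f2 t / 2 * y ^ 2"
    for y
  have "taylor_remainder_sum f f1 f2 w x n t = (\<Sum>i=1..n. w i * f (x i) - w i * p (x i))"
    unfolding taylor_remainder_sum_def p_def
    by (intro sum.cong refl) (simp add: power2_eq_square field_simps)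
  also have "\<dots> = (\<Sum>i=1..n. w i * f (x i)) - (\<Sum>i=1..n. w i * p (x i))"
    by (rule sum_subtractf)
  also have "(\<Sum>i=1..n. w i * p (x i)) = 0"
    unfolding p_def by (rule vanishing_moments_quadratic[OF assms])
  finally show ?thesis by simp
qed

text \<open>Write \<open>H j t\<close> for the Taylor remainder sum.  On the gap \<open>[x (j+1), x j]\<close> the slope of
  \<open>H j\<close> is \<open>-f'''/2\<close> times the kernel, so \<open>H j\<close> decreases there; \<open>H (j+1)\<close> and \<open>H j\<close> agree
  at \<open>x (j+1)\<close> since the new remainder vanishes there; \<open>H 1 (x 1) = 0\<close>; and \<open>H n\<close> is the
  functional.  Hence \<open>0 = H 1 (x 1) \<le> H 2 (x 2) \<le> \<dots> \<le> H n (x n)\<close>.\<close>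
lemma nonneg_kernel_imp_nonneg_functional:
  fixes x w :: "nat \<Rightarrow> real" and f :: "real \<Rightarrow> real"
  assumes decr: "decreasing_nodes n x"
    and range: "x ` {1..n} \<subseteq> {a..b}"
    and moments: "vanishing_moments n w x"
    and kernel_nonneg: "\<forall>t. peano_kernel n w x t \<ge> 0"
    and f: "thrice_diff_nonneg3 a b f"
  shows "(\<Sum>i=1..n. w i * f (x i)) \<ge> 0"
proof -
  obtain f1 f2 f3 where
    d1: "\<And>t. t \<in> {a..b} \<Longrightarrow> (f has_real_derivative f1 t) (at t within {a..b})" and
    d2: "\<And>t. t \<in> {a..b} \<Longrightarrow> (f1 has_real_derivative f2 t) (at t within {a..b})" and
    d3: "\<And>t. t \<in> {a..b} \<Longrightarrow> (f2 has_real_derivative f3 t) (at t within {a..b})" and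
    f3_nonneg: "\<And>t. t \<in> {a..b} \<Longrightarrow> f3 t \<ge> 0"
    using f unfolding thrice_diff_nonneg3_def by blast
  let ?H = "taylor_remainder_sum f f1 f2 w x"
  have H_deriv: "(?H j has_real_derivative -(f3 t / 2) * (\<Sum>i=1..j. w i * (x i - t) ^ 2))
                   (at t within {a..b})" if "t \<in> {a..b}" for j t
    using d1[OF that] d2[OF that] d3[OF that] by (rule taylor_remainder_sum_deriv)
  have H_decreasing: "?H j (x j) \<le> ?H j (x (j+1))" if j: "1 \<le> j" "j < n" for j
  proof (rule DERIV_nonpos_imp_decreasing_open[of "x (j+1)" "x j" "?H j"])
    have gap: "x (j+1) \<le> x j" "a \<le> x (j+1)" "x j \<le> b"
      using decreasing_nodes_le[OF decr, of j "j+1"] range j by (auto simp: image_subset_iff)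
    then show "x (j+1) \<le> x j" by simp
    show "continuous_on {x (j+1)..x j} (?H j)"
    proof (rule DERIV_continuous_on)
      fix t assume "t \<in> {x (j+1)..x j}"
      then show "(?H j has_real_derivative -(f3 t / 2) * (\<Sum>i=1..j. w i * (x i - t) ^ 2))
                   (at t within {x (j+1)..x j})"
        using gap by (intro DERIV_subset[OF H_deriv]) auto
    qed
    fix t assume t: "x (j+1) < t" "t < x j"
    have "peano_kernel n w x t = (\<Sum>i=1..j. w i * (x i - t) ^ 2)"
      using t j by (intro peano_kernel_between[OF decr]) auto
    then have "-(f3 t / 2) * (\<Sum>i=1..j. w i * (x i - t) ^ 2) \<le> 0"
      using spec[OF kernel_nonneg, of t] f3_nonneg[of t] t gap by (simp add: mult_nonneg_nonneg)
    moreover have "at t within {a..b} = at t" using t gap by (intro at_within_Icc_at) auto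
    ultimately show "\<exists>y. (?H j has_real_derivative y) (at t) \<and> y \<le> 0"
      using H_deriv[of t j] t gap by auto
  qed
  have H_nonneg: "1 \<le> j \<Longrightarrow> j \<le> n \<Longrightarrow> ?H j (x j) \<ge> 0" for j
  proof (induction j)
    case 0 then show ?case by simp
  next
    case (Suc j)
    show ?case
    proof (cases "j = 0")
      case True then show ?thesis by (simp add: taylor_remainder_sum_def)
    next
      case False
      have "?H (Suc j) (x (Suc j)) = ?H j (x (Suc j))" by (simp add: taylor_remainder_sum_def)
      then show ?thesis using Suc False H_decreasing[of j] by simp
    qed
  qed
  show ?thesis
  proof (cases "n = 0")
    case True then show ?thesis by simp
  next
    case False
    then show ?thesis using H_nonneg[of n] taylor_remainder_sum_all[OF moments] by simp
  qed
qed

text \<open>The test functions for necessity: the second difference with step \<open>h\<close> of the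
  truncated power \<open>(y - s)\<^sub>+\<^sup>k\<close>.  For \<open>k = 1\<close> it is the hat function on \<open>[s, s + 2h]\<close>; for
  \<open>k = 4\<close> it is thrice differentiable with third derivative \<open>24\<close> times that hat.\<close>
definition bump :: "real \<Rightarrow> real \<Rightarrow> nat \<Rightarrow> real \<Rightarrow> real" where
  "bump s h k y = (max (y - s) 0) ^ k - 2 * (max (y - (s + h)) 0) ^ k + (max (y - (s + 2 * h)) 0) ^ k"

lemma bump_deriv:
  assumes "2 \<le> k"
  shows "(bump s h k has_real_derivative real k * bump s h (k - 1) y) (at y)"
proof -
  have "((\<lambda>y. (max (y - s) 0) ^ k - 2 * (max (y - (s + h)) 0) ^ k + (max (y - (s + 2 * h)) 0) ^ k)
          has_real_derivative real k * (max (y - s) 0) ^ (k - 1)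
            - 2 * (real k * (max (y - (s + h)) 0) ^ (k - 1))
            + real k * (max (y - (s + 2 * h)) 0) ^ (k - 1)) (at y)"
    by (intro DERIV_add DERIV_diff DERIV_cmult truncated_power_deriv assms)
  then show ?thesis unfolding bump_def[abs_def] by (simp add: algebra_simps)
qed

lemma bump_thrice_diff_nonneg:
  assumes "0 \<le> h"
  shows "thrice_diff_nonneg3 a b (bump s h 4)"
proof -
  have hat_nonneg: "0 \<le> bump s h 1 y" for y
    using assms unfolding bump_def by (simp add: max_def)
  have d1: "(bump s h 4 has_real_derivative 4 * bump s h 3 y) (at y)" for y
    using bump_deriv[of 4 s h y] by simp
  have d2: "((\<lambda>y. 4 * bump s h 3 y) has_real_derivative 12 * bump s h 2 y) (at y)" for y
    using DERIV_cmult[OF bump_deriv[of 3 s h y], of 4] by simp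
  have d3: "((\<lambda>y. 12 * bump s h 2 y) has_real_derivative 24 * bump s h 1 y) (at y)" for y
    using DERIV_cmult[OF bump_deriv[of 2 s h y], of 12] by simp
  show ?thesis
    unfolding thrice_diff_nonneg3_def
    using d1 d2 d3 hat_nonneg
    by (intro exI[of _ "\<lambda>y. 4 * bump s h 3 y"] exI[of _ "\<lambda>y. 12 * bump s h 2 y"]
              exI[of _ "\<lambda>y. 24 * bump s h 1 y"])
       (auto intro: has_field_derivative_at_within)
qed

lemma bump_vanishes_below: "0 \<le> h \<Longrightarrow> y \<le> s \<Longrightarrow> bump s h 4 y = 0"
  unfolding bump_def by (simp add: max_def)

lemma bump_above:
  "0 \<le> h \<Longrightarrow> s + 2 * h \<le> y \<Longrightarrow> bump s h 4 y = 12 * h ^ 2 * (y - (s + h)) ^ 2 + 2 * h ^ 4"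
  unfolding bump_def by (simp add: max_def power4_eq_xxxx power2_eq_square algebra_simps)

lemma bump_functional:
  fixes x w :: "nat \<Rightarrow> real"
  assumes decr: "decreasing_nodes n x"
    and j: "1 \<le> j" "j < n" and h: "0 \<le> h" and gap: "x (j+1) \<le> s" "s + 2 * h \<le> x j"
  shows "(\<Sum>i=1..n. w i * bump s h 4 (x i)) =
           12 * h ^ 2 * peano_kernel n w x (s + h) + 2 * h ^ 4 * (\<Sum>i=1..j. w i)"
proof -
  have "(\<Sum>i=1..n. w i * bump s h 4 (x i)) =
          (\<Sum>i=1..j. w i * (12 * h ^ 2 * (x i - (s + h)) ^ 2 + 2 * h ^ 4))"
  proof (rule sum_upto_split)
    fix i assume "1 \<le> i" "i \<le> j"
    then have "s + 2 * h \<le> x i" using decreasing_nodes_le[OF decr, of i j] j gap by fastforce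
    then show "w i * bump s h 4 (x i) = w i * (12 * h ^ 2 * (x i - (s + h)) ^ 2 + 2 * h ^ 4)"
      using bump_above h by simp
  next
    fix i assume "j < i" "i \<le> n"
    then have "x i \<le> s" using decreasing_nodes_le[OF decr, of "j+1" i] gap by fastforce
    then show "w i * bump s h 4 (x i) = 0" using bump_vanishes_below h by simp
  qed (use j in simp)
  also have "\<dots> = 12 * h ^ 2 * (\<Sum>i=1..j. w i * (x i - (s + h)) ^ 2) + 2 * h ^ 4 * (\<Sum>i=1..j. w i)"
    by (simp add: distrib_left sum.distrib sum_distrib_left sum_distrib_right mult_ac)
  also have "(\<Sum>i=1..j. w i * (x i - (s + h)) ^ 2) = peano_kernel n w x (s + h)"
    using j h gap by (intro peano_kernel_between[OF decr, symmetric]) auto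
  finally show ?thesis .
qed

text \<open>The kernel is continuous and the nodes are finitely many, so a negative value is
  also attained away from the nodes.\<close>
lemma negative_kernel_off_nodes:
  assumes "peano_kernel n w x t0 < 0"
  obtains t where "peano_kernel n w x t < 0" "t \<notin> x ` {1..n}"
proof -
  have "open {t. peano_kernel n w x t < 0}"
    by (intro open_Collect_less peano_kernel_continuous continuous_on_const)
  then obtain e where "0 < e" and ball: "ball t0 e \<subseteq> {t. peano_kernel n w x t < 0}"
    using assms by (auto simp: open_contains_ball)
  have "infinite (ball t0 e - x ` {1..n})"
    using \<open>0 < e\<close> by (intro Diff_infinite_finite) (auto simp: ball_eq_greaterThanLessThan)
  then obtain t where "t \<in> ball t0 e" "t \<notin> x ` {1..n}"
    using infinite_imp_nonempty by blast
  then show ?thesis using that ball by blast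
qed

text \<open>Where the kernel is negative, a narrow bump centred there makes the functional
  negative: the kernel term \<open>12 h\<^sup>2 G t\<close> dominates the error \<open>2 h\<^sup>4 W j\<close> for small \<open>h\<close>.\<close>
lemma negative_kernel_imp_counterexample:
  fixes x w :: "nat \<Rightarrow> real"
  assumes decr: "decreasing_nodes n x"
    and moments: "vanishing_moments n w x"
    and negative: "peano_kernel n w x t0 < 0"
  shows "\<exists>f. thrice_diff_nonneg3 a b f \<and> (\<Sum>i=1..n. w i * f (x i)) < 0"
proof -
  obtain t where neg: "peano_kernel n w x t < 0" and off: "t \<notin> x ` {1..n}"
    using negative_kernel_off_nodes[OF negative] by blast
  then obtain j where j: "1 \<le> j" "j < n" and gap: "x (j+1) < t" "t \<le> x j"
    using negative_kernel_in_gap[OF decr moments] by blast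
  have "t \<noteq> x j" using off j by auto
  with gap have gap': "t < x j" by simp
  define W where "W = (\<Sum>i=1..j. w i)"
  have "((\<lambda>h. 12 * peano_kernel n w x t + 2 * h ^ 2 * W) \<longlongrightarrow> 12 * peano_kernel n w x t)
          (at_right 0)"
    by (auto intro!: tendsto_eq_intros)
  then have "\<forall>\<^sub>F h in at_right 0. 12 * peano_kernel n w x t + 2 * h ^ 2 * W < 0"
    by (rule order_tendstoD(2)) (use neg in simp)
  moreover have "\<forall>\<^sub>F h in at_right 0. h < min (t - x (j+1)) (x j - t)"
    using gap gap' by (intro order_tendstoD(2)[OF tendsto_ident_at]) auto
  ultimately have "\<forall>\<^sub>F h in at_right (0::real). 0 < h \<and> h < min (t - x (j+1)) (x j - t) \<and>
                      12 * peano_kernel n w x t + 2 * h ^ 2 * W < 0"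
    using eventually_at_right_less[of "0::real"] by eventually_elim auto
  then obtain h where h: "0 < h" "h < t - x (j+1)" "h < x j - t"
    and small: "12 * peano_kernel n w x t + 2 * h ^ 2 * W < 0"
    using eventually_happens'[OF trivial_limit_at_right_real] by auto
  have "(\<Sum>i=1..n. w i * bump (t - h) h 4 (x i)) = h ^ 2 * (12 * peano_kernel n w x t + 2 * h ^ 2 * W)"
    using bump_functional[OF decr j, of h "t - h" w] h
    by (simp add: W_def algebra_simps power4_eq_xxxx power2_eq_square)
  also have "\<dots> < 0" using h small by (simp add: mult_pos_neg)
  finally show ?thesis using bump_thrice_diff_nonneg[of h] h by auto
qed

lemma functional_nonneg_iff_kernel_nonneg:
  fixes x w :: "nat \<Rightarrow> real"
  assumes "decreasing_nodes n x" and "x ` {1..n} \<subseteq> {a..b}" and "vanishing_moments n w x"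
  shows "(\<forall>f. thrice_diff_nonneg3 a b f \<longrightarrow> (\<Sum>i=1..n. w i * f (x i)) \<ge> 0) \<longleftrightarrow>
           (\<forall>t. peano_kernel n w x t \<ge> 0)"
proof
  assume functional: "\<forall>f. thrice_diff_nonneg3 a b f \<longrightarrow> (\<Sum>i=1..n. w i * f (x i)) \<ge> 0"
  show "\<forall>t. peano_kernel n w x t \<ge> 0"
  proof (intro allI, rule ccontr)
    fix t assume "\<not> peano_kernel n w x t \<ge> 0"
    then obtain f where "thrice_diff_nonneg3 a b f" and "(\<Sum>i=1..n. w i * f (x i)) < 0"
      using negative_kernel_imp_counterexample[OF assms(1,3), of t] by force
    with functional show False by force
  qed
qed (rule allI, rule impI, rule nonneg_kernel_imp_nonneg_functional[OF assms])

text \<open>Otherwise the kernel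
  is negative at the vertex \<open>M j / W j\<close> of the quadratic \<open>W j t\<^sup>2 - 2 M j t + Q j\<close> that it
  equals on the gap \<open>[x (j+1), x j]\<close>: the two inequalities of the condition place the vertex
  in the gap and force \<open>W j > 0\<close>.\<close>
lemma nonneg_kernel_imp_condition:
  fixes x w :: "nat \<Rightarrow> real"
  assumes decr: "decreasing_nodes n x"
    and kernel_nonneg: "\<forall>t. peano_kernel n w x t \<ge> 0"
    and j: "j \<in> {1..n-1}"
    and upper: "(\<Sum>i=1..j. w i) * x j \<ge> (\<Sum>i=1..j. w i * x i)"
    and lower: "(\<Sum>i=1..j. w i * x i) \<ge> (\<Sum>i=1..j. w i) * x (j+1)"
  shows "(\<Sum>i=1..j. w i) * (\<Sum>i=1..j. w i * (x i) ^ 2) \<ge> (\<Sum>i=1..j. w i * x i) ^ 2"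
proof (rule ccontr)
  define W where "W = (\<Sum>i=1..j. w i)"
  define M where "M = (\<Sum>i=1..j. w i * x i)"
  define Q where "Q = (\<Sum>i=1..j. w i * (x i) ^ 2)"
  assume "\<not> (\<Sum>i=1..j. w i) * (\<Sum>i=1..j. w i * (x i) ^ 2) \<ge> (\<Sum>i=1..j. w i * x i) ^ 2"
  then have failed: "W * Q < M ^ 2" by (simp add: W_def M_def Q_def)
  have j': "1 \<le> j" "j < n" using j by auto
  have gap: "x (j+1) < x j" using decreasing_nodes_less[OF decr, of j "j+1"] j' by auto
  have upper': "M \<le> W * x j" and lower': "W * x (j+1) \<le> M"
    using upper lower by (simp_all add: W_def M_def)
  have W_pos: "W > 0"
  proof (rule ccontr)
    assume "\<not> W > 0"
    then have "W * x j \<le> W * x (j+1)" using gap by (simp add: mult_left_mono_neg)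
    then have "W * x j = W * x (j+1)" using upper' lower' by linarith
    then have "W = 0" using gap by simp
    then have "M = 0" using upper' lower' by simp
    then show False using failed \<open>W = 0\<close> by simp
  qed
  define t where "t = M / W"
  have "x (j+1) \<le> t" "t \<le> x j"
    using upper' lower' W_pos by (simp_all add: t_def field_simps mult.commute)
  then have "peano_kernel n w x t = W * t ^ 2 - 2 * t * M + Q"
    unfolding W_def M_def Q_def using j' by (intro peano_kernel_quadratic[OF decr]) auto
  also have "\<dots> = (W * Q - M ^ 2) / W" using W_pos by (simp add: t_def field_simps power2_eq_square)
  also have "\<dots> < 0" using failed W_pos by (simp add: divide_neg_pos)
  finally show False using kernel_nonneg by (meson not_le)
qed

lemma leftmost_minimum:
  fixes G :: "real \<Rightarrow> real"
  assumes cont: "continuous_on UNIV G" and outside: "\<And>t. t \<notin> {p..q} \<Longrightarrow> G t = 0"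
    and negative: "G s < 0"
  obtains t0 where "\<And>t. G t0 \<le> G t" and "\<And>t. G t = G t0 \<Longrightarrow> t0 \<le> t"
proof -
  have "s \<in> {p..q}" using outside negative by force
  then obtain t' where "t' \<in> {p..q}" and min_Icc: "\<forall>t\<in>{p..q}. G t' \<le> G t"
    using continuous_attains_inf[of "{p..q}" G] continuous_on_subset[OF cont] by blast
  have "G t' < 0" using min_Icc \<open>s \<in> {p..q}\<close> negative by force
  then have min: "G t' \<le> G t" for t using min_Icc outside[of t] by (cases "t \<in> {p..q}") auto
  define Z where "Z = {p..q} \<inter> {t. G t \<le> G t'}"
  have "compact Z"
    unfolding Z_def by (intro compact_Int_closed compact_Icc closed_Collect_le cont continuous_on_const)
  moreover have "t' \<in> Z" using \<open>t' \<in> {p..q}\<close> by (simp add: Z_def)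
  ultimately obtain t0 where "t0 \<in> Z" and leftmost: "\<forall>t\<in>Z. t0 \<le> t"
    using compact_attains_inf[of Z] by blast
  then have "G t0 = G t'" using min[of t0] by (simp add: Z_def)
  moreover have "t0 \<le> t" if "G t = G t'" for t
  proof -
    have "t \<in> {p..q}" using that outside[of t] \<open>G t' < 0\<close> by force
    then show ?thesis using that leftmost by (simp add: Z_def)
  qed
  ultimately show ?thesis using that min by metis
qed

text \<open>At the leftmost minimum point
  \<open>t0\<close> of a kernel with a negative value, \<open>t0\<close> lies in a gap \<open>(x (j+1), x j]\<close> where the
  kernel is \<open>W j t\<^sup>2 - 2 M j t + Q j\<close>, and stationarity gives \<open>M j = t0 W j\<close>.  If \<open>W j > 0\<close>
  the condition at \<open>j\<close> applies and gives \<open>W j G t0 = W j Q j - M j\<^sup>2 \<ge> 0\<close>; if \<open>W j \<le> 0\<close> then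
  \<open>G (x (j+1)) \<le> G t0\<close>, contradicting leftmostness.\<close>
lemma conditions_imp_nonneg_kernel:
  fixes x w :: "nat \<Rightarrow> real"
  assumes decr: "decreasing_nodes n x"
    and moments: "vanishing_moments n w x"
    and conditions: "\<forall>j\<in>{1..n-1}.
            (\<Sum>i=1..j. w i) * x j \<ge> (\<Sum>i=1..j. w i * x i) \<and>
            (\<Sum>i=1..j. w i * x i) \<ge> (\<Sum>i=1..j. w i) * x (j+1) \<longrightarrow>
            (\<Sum>i=1..j. w i) * (\<Sum>i=1..j. w i * (x i) ^ 2) \<ge> (\<Sum>i=1..j. w i * x i) ^ 2"
  shows "peano_kernel n w x t \<ge> 0"
proof (rule ccontr)
  let ?G = "peano_kernel n w x"
  assume "\<not> ?G t \<ge> 0"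
  then have "?G t < 0" by simp
  moreover have "?G s = 0" if "s \<notin> {x n..x 1}" for s
    using that by (intro peano_kernel_vanishes_outside[OF decr moments]) auto
  ultimately obtain t0 where min: "\<And>s. ?G t0 \<le> ?G s" and leftmost: "\<And>s. ?G s = ?G t0 \<Longrightarrow> t0 \<le> s"
    using leftmost_minimum[OF peano_kernel_continuous] by blast
  have neg: "?G t0 < 0" using min[of t] \<open>?G t < 0\<close> by simp
  then obtain j where j: "1 \<le> j" "j < n" and gap: "x (j+1) < t0" "t0 \<le> x j"
    using negative_kernel_in_gap[OF decr moments] by blast
  define W where "W = (\<Sum>i=1..j. w i)"
  define M where "M = (\<Sum>i=1..j. w i * x i)"
  define Q where "Q = (\<Sum>i=1..j. w i * (x i) ^ 2)"
  have quadratic: "?G s = W * s ^ 2 - 2 * s * M + Q" if "x (j+1) \<le> s" "s \<le> x j" for s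
    unfolding W_def M_def Q_def using j that by (intro peano_kernel_quadratic[OF decr]) auto
  have "(?G has_real_derivative -2 * (M - t0 * W)) (at t0)"
    unfolding W_def M_def using j gap by (intro peano_kernel_slope[OF decr]) auto
  then have "-2 * (M - t0 * W) = 0"
    by (rule DERIV_local_min[OF _ zero_less_one]) (use min in blast)
  then have stationary: "M = t0 * W" by simp
  show False
  proof (cases "W > 0")
    case True
    have "j \<in> {1..n-1}" using j by simp
    then have condition_j: "M \<le> W * x j \<and> W * x (j+1) \<le> M \<longrightarrow> M ^ 2 \<le> W * Q"
      using conditions unfolding W_def M_def Q_def by blast
    have "M \<le> W * x j" "W * x (j+1) \<le> M"
      using gap stationary True by (simp_all add: mult.commute)
    with condition_j have condition: "M ^ 2 \<le> W * Q" by blast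
    have "?G t0 = Q - W * t0 ^ 2"
      using quadratic[of t0] gap stationary by (simp add: power2_eq_square algebra_simps)
    then have "W * ?G t0 = W * Q - (t0 * W) ^ 2"
      by (simp add: power2_eq_square right_diff_distrib mult_ac)
    then have "W * ?G t0 = W * Q - M ^ 2" using stationary by simp
    with condition have "0 \<le> W * ?G t0" by simp
    then show False using mult_pos_neg[OF True neg] by linarith
  next
    case False
    have "?G (x (j+1)) - ?G t0 = W * (x (j+1) - t0) ^ 2"
      using quadratic[of "x (j+1)"] quadratic[of t0] gap stationary
      by (simp add: power2_eq_square algebra_simps)
    also have "\<dots> \<le> 0" using False by (simp add: mult_nonpos_nonneg)
    finally have "?G (x (j+1)) = ?G t0" using min[of "x (j+1)"] by simp
    then have "t0 \<le> x (j+1)" by (rule leftmost)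
    with gap show False by simp
  qed
qed

lemma kernel_nonneg_iff_conditions:
  fixes x w :: "nat \<Rightarrow> real"
  assumes "decreasing_nodes n x" and "vanishing_moments n w x"
  shows "(\<forall>t. peano_kernel n w x t \<ge> 0) \<longleftrightarrow>
         (\<forall>j\<in>{1..n-1}.
            (\<Sum>i=1..j. w i) * x j \<ge> (\<Sum>i=1..j. w i * x i) \<and>
            (\<Sum>i=1..j. w i * x i) \<ge> (\<Sum>i=1..j. w i) * x (j+1) \<longrightarrow>
            (\<Sum>i=1..j. w i) * (\<Sum>i=1..j. w i * (x i) ^ 2) \<ge> (\<Sum>i=1..j. w i * x i) ^ 2)"
  using conditions_imp_nonneg_kernel[OF assms] nonneg_kernel_imp_condition[OF assms(1)]
  by blast

theorem mainTheorem3: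
  fixes a b :: real and n :: nat and x w :: "nat \<Rightarrow> real"
  assumes decr: "\<And>i j. 1 \<le> i \<Longrightarrow> i < j \<Longrightarrow> j \<le> n \<Longrightarrow> x j < x i"
    and range: "\<And>i. 1 \<le> i \<Longrightarrow> i \<le> n \<Longrightarrow> x i \<in> {a..b}"
    and W0: "(\<Sum>i=1..n. w i) = 0"
    and M0: "(\<Sum>i=1..n. w i * x i) = 0"
    and Q0: "(\<Sum>i=1..n. w i * (x i)^2) = 0"
  shows "(\<forall>f. thrice_diff_nonneg3 a b f \<longrightarrow> (\<Sum>i=1..n. w i * f (x i)) \<ge> 0) \<longleftrightarrow>
         (\<forall>j\<in>{1..n-1}.
            (\<Sum>i=1..j. w i) * x j \<ge> (\<Sum>i=1..j. w i * x i) \<and>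
            (\<Sum>i=1..j. w i * x i) \<ge> (\<Sum>i=1..j. w i) * x (j+1) \<longrightarrow>
            (\<Sum>i=1..j. w i) * (\<Sum>i=1..j. w i * (x i)^2) \<ge> (\<Sum>i=1..j. w i * x i)^2)"
proof -
  have nodes: "decreasing_nodes n x"
    using decr unfolding decreasing_nodes_def by blast
  have nodes_in_range: "x ` {1..n} \<subseteq> {a..b}"
    using range by auto
  have moments: "vanishing_moments n w x"
    using W0 M0 Q0 unfolding vanishing_moments_def by blast
  note functional_nonneg_iff_kernel_nonneg[OF nodes nodes_in_range moments]
  also note kernel_nonneg_iff_conditions[OF nodes moments]
  finally show ?thesis .
qed

end
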